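(* Let $h\in\mathcal H$, $k_0=k_0(h)$, $h_0=h(k_0)$ and $h_1=h(k_0+1)$. Then $\operatorname{hdepth}(h)=k_0$ if and only if $h_0>h_1$.
   Context: $\mathcal H$ denotes the set of nonzero functions $h:\mathbb Z\to\mathbb Z_{\ge 0}$ such that $h(j)=0$ for all sufficiently negative $j$. For $h\in\mathcal H$ and integers $k\le d$, set $\beta_k^d(h)=\sum_{j\le k}(-1)^{k-j}\binom{d-j}{k-j}h(j)$, and $\operatorname{hdepth}(h)=\max\{d\in\mathbb Z:\ \beta_k^d(h)\ge 0\text{ for all integers }k\le d\}$. Also $k_0(h)=\min\{j: h(j)>0\}$. *)

theory Defs
  imports Main
begin

definition hclass :: "(int \<Rightarrow> nat) set" where
  "hclass = {h. (\<exists>j. h j \<noteq> 0) \<and> (\<exists>N. \<forall>j\<le>N. h j = 0)}"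

text \<open>beta_k^d(h) = sum_{j<=k} (-1)^(k-j) binom(d-j, k-j) h(j); terms with h j = 0 are omitted,
  which makes the index set finite for h in H.  Intended for k <= d.\<close>
definition beta :: "int \<Rightarrow> int \<Rightarrow> (int \<Rightarrow> nat) \<Rightarrow> int" where
  "beta k d h = (\<Sum>j\<in>{j. j \<le> k \<and> h j \<noteq> 0}.
      (-1) ^ nat (k - j) * int (nat (d - j) choose nat (k - j)) * int (h j))"

definition hdepth :: "(int \<Rightarrow> nat) \<Rightarrow> int" where
  "hdepth h = (GREATEST d. \<forall>k. k \<le> d \<longrightarrow> beta k d h \<ge> 0)"

definition k0 :: "(int \<Rightarrow> nat) \<Rightarrow> int" where
  "k0 h = (LEAST j. h j > 0)"

end

theory Submission
  imports Defs
begin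

text \<open>Let a = k0 h. Since h vanishes below a, beta k d h = 0 for k < a and beta a d h = h a,
  so d = a is admissible and hdepth h \<ge> a. The first nontrivial coefficient is
  beta (a + 1) d h = h (a + 1) - (d - a) h a: for d = a + 1 it is nonnegative exactly when
  h a \<le> h (a + 1), and for any admissible d > a it forces h a \<le> (d - a) h a \<le> h (a + 1).\<close>

lemma int_Least_bounded_below:
  fixes P :: "int \<Rightarrow> bool"
  assumes "P x" and bound: "\<And>y. P y \<Longrightarrow> b \<le> y"
  shows "P (LEAST y. P y) \<and> (\<forall>y. P y \<longrightarrow> (LEAST y. P y) \<le> y)"
proof -
  define S where "S = {y \<in> {b..x}. P y}"
  have S: "finite S" "x \<in> S"
    using assms unfolding S_def by (auto intro: finite_subset[of _ "{b..x}"])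
  have least: "P (Min S) \<and> (\<forall>y. P y \<longrightarrow> Min S \<le> y)"
  proof (intro conjI allI impI)
    show "P (Min S)" using Min_in[OF S(1)] S(2) unfolding S_def by auto
    show "Min S \<le> y" if "P y" for y
    proof (cases "y \<le> x")
      case True
      then have "y \<in> S" using that bound unfolding S_def by auto
      then show ?thesis using S(1) by simp
    next
      case False
      then show ?thesis using Min_le[OF S] by simp
    qed
  qed
  then have "(LEAST y. P y) = Min S" by (intro Least_equality) auto
  with least show ?thesis by simp
qed

lemma int_Greatest_bounded_above:
  fixes P :: "int \<Rightarrow> bool"
  assumes "P x" and bound: "\<And>y. P y \<Longrightarrow> y \<le> b"
  shows "P (GREATEST y. P y) \<and> (\<forall>y. P y \<longrightarrow> y \<le> (GREATEST y. P y))"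
proof -
  define S where "S = {y \<in> {x..b}. P y}"
  have S: "finite S" "x \<in> S"
    using assms unfolding S_def by (auto intro: finite_subset[of _ "{x..b}"])
  have greatest: "P (Max S) \<and> (\<forall>y. P y \<longrightarrow> y \<le> Max S)"
  proof (intro conjI allI impI)
    show "P (Max S)" using Max_in[OF S(1)] S(2) unfolding S_def by auto
    show "y \<le> Max S" if "P y" for y
    proof (cases "x \<le> y")
      case True
      then have "y \<in> S" using that bound unfolding S_def by auto
      then show ?thesis using S(1) by simp
    next
      case False
      then show ?thesis using Max_ge[OF S] by simp
    qed
  qed
  then have "(GREATEST y. P y) = Max S" by (intro Greatest_equality) auto
  with greatest show ?thesis by simp
qed

lemma k0_least:
  assumes "h \<in> hclass"
  shows "0 < h (k0 h) \<and> (\<forall>j<k0 h. h j = 0)"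
proof -
  obtain x N where "h x \<noteq> 0" and vanish: "\<forall>j\<le>N. h j = 0"
    using assms unfolding hclass_def by blast
  then have "0 < h x" by simp
  moreover have "N + 1 \<le> y" if "0 < h y" for y
    using that vanish by (metis gr_implies_not0 zless_imp_add1_zle not_le)
  ultimately have "0 < h (k0 h) \<and> (\<forall>y. 0 < h y \<longrightarrow> k0 h \<le> y)"
    unfolding k0_def by (rule int_Least_bounded_below)
  then show ?thesis by (auto simp: not_less)
qed

definition betas_nonneg :: "int \<Rightarrow> (int \<Rightarrow> nat) \<Rightarrow> bool" where
  "betas_nonneg d h \<longleftrightarrow> (\<forall>k. k \<le> d \<longrightarrow> beta k d h \<ge> 0)"

lemma hdepth_eq_Greatest_betas_nonneg: "hdepth h = (GREATEST d. betas_nonneg d h)"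
  unfolding hdepth_def betas_nonneg_def ..

context
  fixes h :: "int \<Rightarrow> nat" and a :: int
  assumes vanish_below: "\<And>j. j < a \<Longrightarrow> h j = 0"
begin

lemma beta_eq_sum_from: "beta k d h =
  (\<Sum>j\<in>{a..k}. (-1) ^ nat (k - j) * int (nat (d - j) choose nat (k - j)) * int (h j))"
  unfolding beta_def
  by (rule sum.mono_neutral_left) (use vanish_below in \<open>auto simp: not_less[symmetric]\<close>)

lemma beta_below:
  assumes "k < a"
  shows "beta k d h = 0"
  using beta_eq_sum_from assms by simp

lemma beta_first: "beta a d h = int (h a)"
  using beta_eq_sum_from[where k = a] by simp

lemma beta_second:
  assumes "a < d"
  shows "beta (a + 1) d h = int (h (a + 1)) - (d - a) * int (h a)"
proof -
  have "{a..a + 1} = {a, a + 1}" by auto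
  then have "beta (a + 1) d h =
      (-1) ^ nat (a + 1 - a) * int (nat (d - a) choose nat (a + 1 - a)) * int (h a)
      + (-1) ^ nat (a + 1 - (a + 1)) * int (nat (d - (a + 1)) choose nat (a + 1 - (a + 1))) * int (h (a + 1))"
    using beta_eq_sum_from[where k = "a + 1" and d = d] by simp
  also have "\<dots> = int (h (a + 1)) - (d - a) * int (h a)"
    using assms by (simp add: algebra_simps)
  finally show ?thesis .
qed

lemma beta_nonneg_if_le:
  assumes "k \<le> a"
  shows "beta k d h \<ge> 0"
proof -
  from assms consider "k < a" | "k = a" by linarith
  then show ?thesis by cases (simp_all add: beta_below beta_first)
qed

lemma betas_nonneg_if_le:
  assumes "d \<le> a"
  shows "betas_nonneg d h"
  using assms beta_nonneg_if_le unfolding betas_nonneg_def by simp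

lemma betas_nonneg_imp_le:
  assumes "a < d" and "betas_nonneg d h"
  shows "(d - a) * int (h a) \<le> int (h (a + 1))"
proof -
  have "beta (a + 1) d h \<ge> 0" using assms unfolding betas_nonneg_def by simp
  then show ?thesis using beta_second[OF assms(1)] by simp
qed

lemma betas_nonneg_succ_iff: "betas_nonneg (a + 1) h \<longleftrightarrow> h a \<le> h (a + 1)"
proof
  assume "betas_nonneg (a + 1) h"
  then show "h a \<le> h (a + 1)" using betas_nonneg_imp_le[of "a + 1"] by simp
next
  assume le: "h a \<le> h (a + 1)"
  show "betas_nonneg (a + 1) h"
    unfolding betas_nonneg_def
  proof (intro allI impI)
    fix k assume "k \<le> a + 1"
    then consider "k \<le> a" | "k = a + 1" by linarith
    then show "beta k (a + 1) h \<ge> 0"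
    proof cases
      case 1
      then show ?thesis by (rule beta_nonneg_if_le)
    next
      case 2
      then show ?thesis using beta_second[of "a + 1"] le by simp
    qed
  qed
qed

lemma hdepth_greatest:
  assumes "0 < h a"
  shows "betas_nonneg (hdepth h) h \<and> (\<forall>d. betas_nonneg d h \<longrightarrow> d \<le> hdepth h)"
  unfolding hdepth_eq_Greatest_betas_nonneg
proof (rule int_Greatest_bounded_above)
  show "betas_nonneg a h" by (rule betas_nonneg_if_le) simp
  show "d \<le> a + int (h (a + 1))" if "betas_nonneg d h" for d
  proof (cases "a < d")
    case True
    have "d - a \<le> (d - a) * int (h a)" using assms True by simp
    also have "\<dots> \<le> int (h (a + 1))" using betas_nonneg_imp_le[OF True that] .
    finally show ?thesis by simp
  qed simp
qed

lemma lt_hdepth_iff: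
  assumes "0 < h a"
  shows "a < hdepth h \<longleftrightarrow> h a \<le> h (a + 1)"
proof
  assume "a < hdepth h"
  then have "(hdepth h - a) * int (h a) \<le> int (h (a + 1))"
    using betas_nonneg_imp_le hdepth_greatest[OF assms] by blast
  moreover have "int (h a) \<le> (hdepth h - a) * int (h a)"
    using \<open>a < hdepth h\<close> by (simp add: mult_le_cancel_right1)
  ultimately show "h a \<le> h (a + 1)" by linarith
next
  assume "h a \<le> h (a + 1)"
  then show "a < hdepth h"
    using betas_nonneg_succ_iff hdepth_greatest[OF assms] by fastforce
qed

end

theorem corollary1p6:
  fixes h :: "int \<Rightarrow> nat"
  assumes "h \<in> hclass"
  shows "hdepth h = k0 h \<longleftrightarrow> h (k0 h) > h (k0 h + 1)"
proof -
  have pos: "0 < h (k0 h)" and vanish: "\<And>j. j < k0 h \<Longrightarrow> h j = 0"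
    using k0_least[OF assms] by auto
  have "betas_nonneg (k0 h) h"
    using betas_nonneg_if_le[where h = h and a = "k0 h", OF vanish] by simp
  then have "k0 h \<le> hdepth h"
    using hdepth_greatest[where h = h and a = "k0 h", OF vanish pos] by blast
  then show ?thesis
    using lt_hdepth_iff[where h = h and a = "k0 h", OF vanish pos] by auto
qed

end
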